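(* In the nondeterministic Outcome Logic instance, for every program $C$ and atomic assertions $P,Q$: \[ \vDash\{P\}\,C\,\{Q\}\quad\text{iff}\quad\vDash\langle P\rangle\,C\,\langle Q\lor\top^\oplus\rangle . \]
   Context: Nondeterministic instance: the execution model is the powerset monad with $\mathsf{bind}(S,k)=\bigcup_{x\in S}k(x)$, $\mathsf{unit}(x)=\{x\}$, monoid operation $\cup$ and unit $\emptyset$; $\Sigma$ is a set of program states with atomic commands $[\![c]\!]\colon\Sigma\to 2^\Sigma$. Programs $C::=\mathbb{0}\mid\mathbb{1}\mid C_1;C_2\mid C_1+C_2\mid C^\star\mid c$ have semantics $[\![C]\!]\colon\Sigma\to2^\Sigma$: $[\![\mathbb{0}]\!](\sigma)=\emptyset$, $[\![\mathbb{1}]\!](\sigma)=\{\sigma\}$, $[\![C_1;C_2]\!](\sigma)=\bigcup_{\tau\in[\![C_1]\!](\sigma)}[\![C_2]\!](\tau)$, $[\![C_1+C_2]\!](\sigma)=[\![C_1]\!](\sigma)\cup[\![C_2]\!](\sigma)$, $[\![C^\star]\!]$ the least fixed point of $f\mapsto\lambda\sigma.f^\dagger([\![C]\!](\sigma))\cup\{\sigma\}$; $[\![C]\!]^\dagger(S)=\bigcup_{\sigma\in S}[\![C]\!](\sigma)$. Atomic assertions come with a relation $\vDash_\Sigma$ on states, and a set $S\subseteq\Sigma$ satisfies atomic $P$ iff $S\neq\emptyset$ and $\sigma\vDash_\Sigma P$ for all $\sigma\in S$. Outcome assertions are built from $\top,\bot,\top^\oplus,\land,\oplus,\Rightarrow$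 and atomic assertions, with $S\vDash\top^\oplus$ iff $S=\emptyset$, $S\vDash\varphi\oplus\psi$ iff $S=S_1\cup S_2$ with $S_1\vDash\varphi$, $S_2\vDash\psi$, and $\land,\Rightarrow,\top,\bot$ classical; $\lnot\varphi=\varphi\Rightarrow\bot$ and $\varphi\lor\psi=\lnot(\lnot\varphi\land\lnot\psi)$. The OL triple $\vDash\langle\varphi\rangle C\langle\psi\rangle$ holds iff for all $S\subseteq\Sigma$, $S\vDash\varphi$ implies $[\![C]\!]^\dagger(S)\vDash\psi$. The Hoare triple $\vDash\{P\}C\{Q\}$ holds iff for all $\sigma$ with $\sigma\vDash_\Sigma P$ and all $\tau\in[\![C]\!](\sigma)$, $\tau\vDash_\Sigma Q$. *)

theory Defs
  imports Main
begin

datatype 'c prog = Zero | One | Seq "'c prog" "'c prog" | Choice "'c prog" "'c prog"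
  | Star "'c prog" | Atom 'c

definition dagger :: "('s \<Rightarrow> 's set) \<Rightarrow> 's set \<Rightarrow> 's set" where
  "dagger f S = (\<Union>x\<in>S. f x)"

fun sem :: "('c \<Rightarrow> 's \<Rightarrow> 's set) \<Rightarrow> 'c prog \<Rightarrow> 's \<Rightarrow> 's set" where
  "sem ac Zero \<sigma> = {}"
| "sem ac One \<sigma> = {\<sigma>}"
| "sem ac (Seq C1 C2) \<sigma> = (\<Union>\<tau>\<in>sem ac C1 \<sigma>. sem ac C2 \<tau>)"
| "sem ac (Choice C1 C2) \<sigma> = sem ac C1 \<sigma> \<union> sem ac C2 \<sigma>"
| "sem ac (Star C) \<sigma> = lfp (\<lambda>f. \<lambda>\<sigma>'. dagger f (sem ac C \<sigma>') \<union> {\<sigma>'}) \<sigma>"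
| "sem ac (Atom c) \<sigma> = ac c \<sigma>"

datatype 'p assn = ATop | ABot | ATopPlus | AAnd "'p assn" "'p assn"
  | AOplus "'p assn" "'p assn" | AImp "'p assn" "'p assn" | AAtom 'p

definition ANeg :: "'p assn \<Rightarrow> 'p assn" where
  "ANeg \<phi> = AImp \<phi> ABot"

definition AOr :: "'p assn \<Rightarrow> 'p assn \<Rightarrow> 'p assn" where
  "AOr \<phi> \<psi> = ANeg (AAnd (ANeg \<phi>) (ANeg \<psi>))"

fun models :: "('s \<Rightarrow> 'p \<Rightarrow> bool) \<Rightarrow> 's set \<Rightarrow> 'p assn \<Rightarrow> bool" where
  "models sa S ATop = True"
| "models sa S ABot = False"
| "models sa S ATopPlus = (S = {})"
| "models sa S (AAnd \<phi> \<psi>) = (models sa S \<phi> \<and> models sa S \<psi>)"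
| "models sa S (AOplus \<phi> \<psi>) = (\<exists>S1 S2. S = S1 \<union> S2 \<and> models sa S1 \<phi> \<and> models sa S2 \<psi>)"
| "models sa S (AImp \<phi> \<psi>) = (models sa S \<phi> \<longrightarrow> models sa S \<psi>)"
| "models sa S (AAtom P) = (S \<noteq> {} \<and> (\<forall>\<sigma>\<in>S. sa \<sigma> P))"

definition ol_triple :: "('c \<Rightarrow> 's \<Rightarrow> 's set) \<Rightarrow> ('s \<Rightarrow> 'p \<Rightarrow> bool)
    \<Rightarrow> 'p assn \<Rightarrow> 'c prog \<Rightarrow> 'p assn \<Rightarrow> bool" where
  "ol_triple ac sa \<phi> C \<psi> = (\<forall>S. models sa S \<phi> \<longrightarrow> models sa (dagger (sem ac C) S) \<psi>)"

definition hoare_triple :: "('c \<Rightarrow> 's \<Rightarrow> 's set) \<Rightarrow> ('s \<Rightarrow> 'p \<Rightarrow> bool)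
    \<Rightarrow> 'p \<Rightarrow> 'c prog \<Rightarrow> 'p \<Rightarrow> bool" where
  "hoare_triple ac sa P C Q = (\<forall>\<sigma>. sa \<sigma> P \<longrightarrow> (\<forall>\<tau>\<in>sem ac C \<sigma>. sa \<tau> Q))"

end

theory Submission
  imports Defs
begin

text \<open>The disjunct \<open>\<top>\<^sup>\<oplus>\<close> admits the empty outcome set, so \<open>Q \<or> \<top>\<^sup>\<oplus>\<close> just says
  that every outcome satisfies \<open>Q\<close>: this is partial correctness. An outcome triple with an
  atomic precondition quantifies over nonempty sets of \<open>P\<close>-states; since \<open>\<dagger>\<close> acts
  pointwise, it reduces to the Hoare triple by taking singleton sets.\<close>

lemma models_AOr: "models sa S (AOr \<phi> \<psi>) \<longleftrightarrow> models sa S \<phi> \<or> models sa S \<psi>"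
  by (simp add: AOr_def ANeg_def)

lemma models_AAtom_or_ATopPlus: "models sa S (AOr (AAtom Q) ATopPlus) \<longleftrightarrow> (\<forall>\<sigma>\<in>S. sa \<sigma> Q)"
  by (auto simp: models_AOr)

lemma dagger_singleton: "dagger f {x} = f x"
  by (simp add: dagger_def)

lemma hoare_triple_iff_dagger:
  "hoare_triple ac sa P C Q \<longleftrightarrow>
   (\<forall>S. S \<noteq> {} \<and> (\<forall>\<sigma>\<in>S. sa \<sigma> P) \<longrightarrow> (\<forall>\<tau>\<in>dagger (sem ac C) S. sa \<tau> Q))"
proof
  assume "hoare_triple ac sa P C Q"
  then show "\<forall>S. S \<noteq> {} \<and> (\<forall>\<sigma>\<in>S. sa \<sigma> P) \<longrightarrow> (\<forall>\<tau>\<in>dagger (sem ac C) S. sa \<tau> Q)"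
    by (auto simp: hoare_triple_def dagger_def)
next
  assume dagger_post: "\<forall>S. S \<noteq> {} \<and> (\<forall>\<sigma>\<in>S. sa \<sigma> P) \<longrightarrow> (\<forall>\<tau>\<in>dagger (sem ac C) S. sa \<tau> Q)"
  show "hoare_triple ac sa P C Q"
    unfolding hoare_triple_def
  proof (intro allI impI)
    fix \<sigma> assume "sa \<sigma> P"
    then show "\<forall>\<tau>\<in>sem ac C \<sigma>. sa \<tau> Q"
      using dagger_post[rule_format, of "{\<sigma>}"] by (simp add: dagger_singleton)
  qed
qed

theorem theorem4p6:
  fixes ac :: "'c \<Rightarrow> 's \<Rightarrow> 's set" and sa :: "'s \<Rightarrow> 'p \<Rightarrow> bool"
    and C :: "'c prog" and P Q :: 'p
  shows "hoare_triple ac sa P C Q \<longleftrightarrow>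
         ol_triple ac sa (AAtom P) C (AOr (AAtom Q) ATopPlus)"
  unfolding hoare_triple_iff_dagger ol_triple_def models_AAtom_or_ATopPlus by simp

end
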